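(* In the random execution model of the context, let $T_{\max}(t)=\max_iT_i(t)$ be the time at which the last node finishes iteration $t$. Then for all $\nu>0$ and all $t$, $$\mathbb{P}\big(T_{\max}(t)\ge\nu t\big)\le\sum_{w\ge\nu t}\sum_{i=1}^n\mathbb{E}\big[X^t(i,w)\big].$$
   Context: There are $n$ nodes and a communication graph. At each iteration $t$, independently, either a communication edge $(i,j)$ is activated (with probability $p_{ij}$) or a node $i$ performs a local computation (with probability $p_i^{\rm comp}$). Activating $(i,j)$ at iteration $t$ takes a random time $\tau_c^{ij}(t)$ and a local computation at $i$ takes a random time $\tau_l^i(t)$; these are positive-integer-valued. Completion times: $T_i(0)=0$; if $(k,\ell)$ is activated at iteration $t$, $T_k(t+1)=T_\ell(t+1)=\max(T_k(t),T_\ell(t))+\tau_c^{k\ell}(t)$; if $k$ computes, $T_k(t+1)=T_k(t)+\tau_l^k(t)$; other $T_i$ unchanged. Integer variables $X^t(i,w)$, $w\in\mathbb{N}$ (with $X^t(i,w)=0$ for $w<0$): $X^0(i,0)=1$ and $X^0(i,w)=0$ for $w\ne0$. If $(i,j)$ is activated at iteration $t$, then for all $w$, $X^{t+1}(i,w)=X^{t+1}(j,w)=X^t(i,w-\tau_c^{ij}(t))+X^t(j,w-\tau_c^{ij}(t))$; if node $i$ computes, $X^{t+1}(i,w+\tau_l^i(t))=X^t(i,w)$ for all $w\ge0$ and $X^{t+1}(i,w)=0$ for $w<\tau_l^i(t)$; all other $X^{t+1}(h,\cdot)=X^t(h,\cdot)$. *)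

theory Defs
  imports "HOL-Probability.Probability"
begin

datatype action = Comm nat nat | Comp nat

primrec Tc :: "(nat \<Rightarrow> action) \<Rightarrow> (nat \<Rightarrow> nat \<Rightarrow> nat \<Rightarrow> nat) \<Rightarrow> (nat \<Rightarrow> nat \<Rightarrow> nat)
               \<Rightarrow> nat \<Rightarrow> nat \<Rightarrow> nat" where
  "Tc a tc tcomp 0 = (\<lambda>i. 0)"
| "Tc a tc tcomp (Suc t) =
     (let T = Tc a tc tcomp t in
      (case a t of
         Comm k l \<Rightarrow> (\<lambda>i. if i = k \<or> i = l then max (T k) (T l) + tc t k l else T i)
       | Comp k \<Rightarrow> (\<lambda>i. if i = k then T k + tcomp t k else T i)))"

text \<open>The counting variables X t i w (for w \<ge> 0; values at negative w are 0 by convention,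
  which is encoded by the guard w \<ge> tau).\<close>
primrec Xc :: "(nat \<Rightarrow> action) \<Rightarrow> (nat \<Rightarrow> nat \<Rightarrow> nat \<Rightarrow> nat) \<Rightarrow> (nat \<Rightarrow> nat \<Rightarrow> nat)
               \<Rightarrow> nat \<Rightarrow> nat \<Rightarrow> nat \<Rightarrow> nat" where
  "Xc a tc tcomp 0 = (\<lambda>i w. if w = 0 then 1 else 0)"
| "Xc a tc tcomp (Suc t) =
     (let X = Xc a tc tcomp t in
      (case a t of
         Comm k l \<Rightarrow> (\<lambda>i w. if i = k \<or> i = l then
                              (if tc t k l \<le> w then X k (w - tc t k l) + X l (w - tc t k l) else 0)
                            else X i w)
       | Comp k \<Rightarrow> (\<lambda>i w. if i = k then
                              (if tcomp t k \<le> w then X k (w - tcomp t k) else 0)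
                            else X i w)))"

end

theory Submission
  imports Defs
begin

text \<open>X^t(i,w) counts the backward paths of total delay w ending at node i; the path
  that always waits for the later of the two partners has delay T_i(t), so
  X^t(i, T_i(t)) \<ge> 1. Hence the indicator of the event is dominated pathwise by the sum
  of the X^t(i,w) over w \<ge> \<nu> t and all i, and taking expectations gives the claim.\<close>

instance action :: countable by countable_datatype

lemma Xc_at_Tc_ge_1: "1 \<le> Xc a tc tcomp t i (Tc a tc tcomp t i)"
proof (induction t arbitrary: i)
  case 0
  then show ?case by simp
next
  case (Suc t)
  show ?case
  proof (cases "a t")
    case (Comm k l)
    have "1 \<le> Xc a tc tcomp t j (Tc a tc tcomp t j)" for j
      using Suc.IH .
    from this[of k] this[of l] this[of i] show ?thesis
      using Comm by (auto simp: Let_def max_def)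
  next
    case (Comp k)
    then show ?thesis using Suc.IH by (auto simp: Let_def)
  qed
qed

lemma measurable_Xc:
  assumes A: "\<And>s. A s \<in> measurable M (count_space UNIV)"
    and C: "\<And>s k l. TC s k l \<in> measurable M (count_space UNIV)"
    and L: "\<And>s k. TL s k \<in> measurable M (count_space UNIV)"
  shows "(\<lambda>\<omega>. Xc (\<lambda>s. A s \<omega>) (\<lambda>s k l. TC s k l \<omega>) (\<lambda>s k. TL s k \<omega>) t i w)
           \<in> measurable M (count_space UNIV)"
proof (induction t arbitrary: i w)
  case 0
  then show ?case by simp
next
  case (Suc t)
  let ?X = "\<lambda>i w \<omega>. Xc (\<lambda>s. A s \<omega>) (\<lambda>s k l. TC s k l \<omega>) (\<lambda>s k. TL s k \<omega>) t i w"
  define F where "F = (\<lambda>act \<omega>. case act of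
      Comm k l \<Rightarrow> (if i = k \<or> i = l then
                    (if TC t k l \<omega> \<le> w then ?X k (w - TC t k l \<omega>) \<omega> + ?X l (w - TC t k l \<omega>) \<omega>
                     else 0)
                  else ?X i w \<omega>)
    | Comp k \<Rightarrow> (if i = k then (if TL t k \<omega> \<le> w then ?X k (w - TL t k \<omega>) \<omega> else 0)
                else ?X i w \<omega>))"
  have step: "(\<lambda>\<omega>. Xc (\<lambda>s. A s \<omega>) (\<lambda>s k l. TC s k l \<omega>) (\<lambda>s k. TL s k \<omega>) (Suc t) i w)
      = (\<lambda>\<omega>. F (A t \<omega>) \<omega>)"
    by (rule ext) (simp add: F_def Let_def split: action.split)
  have shifted: "(\<lambda>\<omega>. ?X k (w - d \<omega>) \<omega>) \<in> measurable M (count_space UNIV)"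
    if "d \<in> measurable M (count_space UNIV)" for k and d :: "_ \<Rightarrow> nat"
    by (rule measurable_compose_countable[where f="\<lambda>w \<omega>. ?X k w \<omega>", OF Suc.IH])
      (rule measurable_compose[OF that], simp)
  have "(\<lambda>\<omega>. F act \<omega>) \<in> measurable M (count_space UNIV)" for act
  proof (cases act)
    case (Comm k l)
    then show ?thesis
      using shifted[OF C, of k t k l] shifted[OF C, of l t k l] C[of t k l] Suc.IH
      by (simp add: F_def)
  next
    case (Comp k)
    then show ?thesis
      using shifted[OF L, of k t k] L[of t k] Suc.IH by (simp add: F_def)
  qed
  then show ?case
    unfolding step by (rule measurable_compose_countable[OF _ A])
qed

lemma emeasure_le_suminf_nn_integral:
  fixes f :: "nat \<Rightarrow> 'a \<Rightarrow> ennreal"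
  assumes f: "\<And>w. f w \<in> borel_measurable M"
    and cover: "\<And>\<omega>. \<omega> \<in> S \<Longrightarrow> \<omega> \<in> space M \<Longrightarrow> \<exists>w\<in>W. 1 \<le> f w \<omega>"
  shows "emeasure M S \<le> (\<Sum>w. if w \<in> W then \<integral>\<^sup>+ \<omega>. f w \<omega> \<partial>M else 0)"
proof -
  let ?g = "\<lambda>w \<omega>. if w \<in> W then f w \<omega> else 0"
  have "emeasure M S \<le> (\<integral>\<^sup>+ \<omega>. indicator S \<omega> \<partial>M)"
    by (cases "S \<in> sets M") (simp_all add: emeasure_notin_sets)
  also have "\<dots> \<le> (\<integral>\<^sup>+ \<omega>. (\<Sum>w. ?g w \<omega>) \<partial>M)"
  proof (rule nn_integral_mono)
    fix \<omega> assume "\<omega> \<in> space M"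
    show "indicator S \<omega> \<le> (\<Sum>w. ?g w \<omega>)"
    proof (cases "\<omega> \<in> S")
      case True
      with cover \<open>\<omega> \<in> space M\<close> obtain w where "w \<in> W" "1 \<le> f w \<omega>" by blast
      then have "1 \<le> ?g w \<omega>" by simp
      also have "\<dots> \<le> (\<Sum>w. ?g w \<omega>)"
        using sum_le_suminf[of "\<lambda>w. ?g w \<omega>" "{w}"] by (simp add: summableI)
      finally show ?thesis using True by simp
    qed simp
  qed
  also have "\<dots> = (\<Sum>w. \<integral>\<^sup>+ \<omega>. ?g w \<omega> \<partial>M)"
    by (rule nn_integral_suminf) (use f in auto)
  also have "\<dots> = (\<Sum>w. if w \<in> W then \<integral>\<^sup>+ \<omega>. f w \<omega> \<partial>M else 0)"
    by (rule suminf_cong) simp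
  finally show ?thesis .
qed

theorem lemma3:
  fixes M :: "'w measure"
    and n :: nat
    and E :: "(nat \<times> nat) set"
    and p :: "nat \<Rightarrow> nat \<Rightarrow> real"
    and pcomp :: "nat \<Rightarrow> real"
    and a :: "nat \<Rightarrow> 'w \<Rightarrow> action"
    and tauc :: "nat \<Rightarrow> nat \<Rightarrow> nat \<Rightarrow> 'w \<Rightarrow> nat"
    and taul :: "nat \<Rightarrow> nat \<Rightarrow> 'w \<Rightarrow> nat"
    and \<nu> :: real
    and t :: nat
  assumes "prob_space M"
    and "n \<ge> 1"
    and "E \<subseteq> {..<n} \<times> {..<n}"
    and "\<And>s. a s \<in> measurable M (count_space UNIV)"
    and "\<And>s k l. tauc s k l \<in> measurable M (count_space UNIV)"
    and "\<And>s k. taul s k \<in> measurable M (count_space UNIV)"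
    and "\<And>s \<omega>. \<omega> \<in> space M \<Longrightarrow>
           a s \<omega> \<in> {Comm i j | i j. (i, j) \<in> E} \<union> {Comp i | i. i < n}"
    and "prob_space.indep_vars M (\<lambda>_. count_space UNIV) a UNIV"
    and "\<And>s i j. (i, j) \<in> E \<Longrightarrow> measure M {\<omega> \<in> space M. a s \<omega> = Comm i j} = p i j"
    and "\<And>s i. i < n \<Longrightarrow> measure M {\<omega> \<in> space M. a s \<omega> = Comp i} = pcomp i"
    and "\<And>s k l \<omega>. \<omega> \<in> space M \<Longrightarrow> tauc s k l \<omega> > 0"
    and "\<And>s k \<omega>. \<omega> \<in> space M \<Longrightarrow> taul s k \<omega> > 0"
    and "\<nu> > 0"
  shows "emeasure M {\<omega> \<in> space M.
            real (Max ((\<lambda>i. Tc (\<lambda>s. a s \<omega>) (\<lambda>s k l. tauc s k l \<omega>) (\<lambda>s k. taul s k \<omega>) t i) ` {..<n}))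
              \<ge> \<nu> * real t}
         \<le> (\<Sum>w. if real w \<ge> \<nu> * real t then
                    (\<Sum>i<n. \<integral>\<^sup>+ \<omega>. ennreal (real
                        (Xc (\<lambda>s. a s \<omega>) (\<lambda>s k l. tauc s k l \<omega>) (\<lambda>s k. taul s k \<omega>) t i w)) \<partial>M)
                  else 0)"
proof -
  define X where "X \<omega> = Xc (\<lambda>s. a s \<omega>) (\<lambda>s k l. tauc s k l \<omega>) (\<lambda>s k. taul s k \<omega>) t" for \<omega>
  define T where "T \<omega> = Tc (\<lambda>s. a s \<omega>) (\<lambda>s k l. tauc s k l \<omega>) (\<lambda>s k. taul s k \<omega>) t" for \<omega>
  have X_meas: "(\<lambda>\<omega>. ennreal (real (X \<omega> i w))) \<in> borel_measurable M" for i w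
    unfolding X_def by (rule measurable_compose[OF measurable_Xc[OF assms(4-6)]]) simp
  have cover: "\<exists>w\<in>{w. \<nu> * real t \<le> real w}. 1 \<le> (\<Sum>i<n. ennreal (real (X \<omega> i w)))"
    if "\<nu> * real t \<le> real (Max (T \<omega> ` {..<n}))" for \<omega>
  proof -
    have "Max (T \<omega> ` {..<n}) \<in> T \<omega> ` {..<n}"
      using \<open>n \<ge> 1\<close> by (intro Max_in) (auto simp: lessThan_empty_iff)
    then obtain i where i: "i < n" "Max (T \<omega> ` {..<n}) = T \<omega> i" by auto
    have "(1::ennreal) \<le> ennreal (real (X \<omega> i (T \<omega> i)))"
      using Xc_at_Tc_ge_1 unfolding X_def T_def by simp
    also have "\<dots> \<le> (\<Sum>j<n. ennreal (real (X \<omega> j (T \<omega> i))))"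
      by (rule member_le_sum) (use i in auto)
    finally show ?thesis using i that by auto
  qed
  have "emeasure M {\<omega> \<in> space M. \<nu> * real t \<le> real (Max (T \<omega> ` {..<n}))}
      \<le> (\<Sum>w. if w \<in> {w. \<nu> * real t \<le> real w}
               then \<integral>\<^sup>+ \<omega>. (\<Sum>i<n. ennreal (real (X \<omega> i w))) \<partial>M else 0)"
    by (intro emeasure_le_suminf_nn_integral borel_measurable_sum X_meas cover) simp
  also have "\<dots> = (\<Sum>w. if \<nu> * real t \<le> real w
               then \<Sum>i<n. \<integral>\<^sup>+ \<omega>. ennreal (real (X \<omega> i w)) \<partial>M else 0)"
    by (rule suminf_cong) (simp only: nn_integral_sum[OF X_meas] mem_Collect_eq)
  finally show ?thesis
    unfolding X_def T_def .
qed

end
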